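(* Let $r,s\in\widetilde{\mathbb{K}}_{sm}$. Then (i) $r\widetilde{\mathbb{K}}_{sm}+s\widetilde{\mathbb{K}}_{sm}=(|r|+|s|)\widetilde{\mathbb{K}}_{sm}=(|r|\vee|s|)\widetilde{\mathbb{K}}_{sm}$; (ii) $r\widetilde{\mathbb{K}}_{sm}\cap s\widetilde{\mathbb{K}}_{sm}=(|r|\wedge|s|)\widetilde{\mathbb{K}}_{sm}$.
   Context: Let $I=(0,1]$ and $\mathbb{K}\in\{\mathbb{R},\mathbb{C}\}$. $\widetilde{\mathbb{K}}_{sm}=\mathcal{E}_{M,sm}/\mathcal{N}_{sm}$ where $\mathcal{E}_{M,sm}$ is the set of nets $(r_\varepsilon)_{\varepsilon\in I}\in\mathbb{K}^I$ smooth in $\varepsilon$ with $|r_\varepsilon|=O(\varepsilon^{-N})$ for some $N$, and $\mathcal{N}_{sm}$ those with $|r_\varepsilon|=O(\varepsilon^m)$ for all $m$; $\widetilde{\mathbb{K}}_{co}$ is defined analogously with continuous nets, and $\tau_{sm}:\widetilde{\mathbb{K}}_{sm}\to\widetilde{\mathbb{K}}_{co}$, $[(r_\varepsilon)]\mapsto[(r_\varepsilon)]$, is a ring isomorphism. For $r=[(r_\varepsilon)_\varepsilon]$, $|r|:=\tau_{sm}^{-1}([(|r_\varepsilon|)_\varepsilon])\in\widetilde{\mathbb{R}}_{sm}\subseteq\widetilde{\mathbb{K}}_{sm}$. For $a,b\in\widetilde{\mathbb{R}}_{sm}$: $a\vee b=\tau_{sm}^{-1}([(\max(a_\varepsilon,b_\varepsilon))_\varepsilon])$,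 $a\wedge b=\tau_{sm}^{-1}([(\min(a_\varepsilon,b_\varepsilon))_\varepsilon])$. *)

theory Defs
  imports "HOL-Analysis.Analysis"
begin

text \<open>Nets are functions real => 'a; only their values on I = (0,1] matter.\<close>

definition Iset :: "real set" where "Iset = {0<..1}"

text \<open>C-infinity on I (one-sided derivatives at the endpoint 1).\<close>
definition smooth_net :: "(real \<Rightarrow> 'a::real_normed_vector) \<Rightarrow> bool" where
  "smooth_net f \<longleftrightarrow> (\<exists>D::nat \<Rightarrow> real \<Rightarrow> 'a. (\<forall>t\<in>Iset. D 0 t = f t) \<and>
     (\<forall>n. \<forall>t\<in>Iset. (D n has_vector_derivative D (Suc n) t) (at t within Iset)))"

definition moderate_net :: "(real \<Rightarrow> 'a::real_normed_vector) \<Rightarrow> bool" where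
  "moderate_net f \<longleftrightarrow> (\<exists>N::nat. \<exists>C. eventually (\<lambda>e. norm (f e) \<le> C * (1 / e) ^ N) (at_right 0))"

definition negligible_net :: "(real \<Rightarrow> 'a::real_normed_vector) \<Rightarrow> bool" where
  "negligible_net f \<longleftrightarrow> (\<forall>m::nat. \<exists>C. eventually (\<lambda>e. norm (f e) \<le> C * e ^ m) (at_right 0))"

definition EM_sm :: "(real \<Rightarrow> 'a::real_normed_vector) set" where
  "EM_sm = {f. smooth_net f \<and> moderate_net f}"

definition EM_co :: "(real \<Rightarrow> 'a::real_normed_vector) set" where
  "EM_co = {f. continuous_on Iset f \<and> moderate_net f}"

definition cls_sm :: "(real \<Rightarrow> 'a::real_normed_vector) \<Rightarrow> (real \<Rightarrow> 'a) set" where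
  "cls_sm f = {g \<in> EM_sm. negligible_net (\<lambda>e. g e - f e)}"

definition cls_co :: "(real \<Rightarrow> 'a::real_normed_vector) \<Rightarrow> (real \<Rightarrow> 'a) set" where
  "cls_co f = {g \<in> EM_co. negligible_net (\<lambda>e. g e - f e)}"

definition K_sm :: "(real \<Rightarrow> 'a::real_normed_vector) set set" where
  "K_sm = cls_sm ` EM_sm"

definition K_co :: "(real \<Rightarrow> 'a::real_normed_vector) set set" where
  "K_co = cls_co ` EM_co"

definition rep :: "(real \<Rightarrow> 'a) set \<Rightarrow> real \<Rightarrow> 'a" where
  "rep A = (SOME f. f \<in> A)"

definition gadd :: "(real \<Rightarrow> 'a::real_normed_field) set \<Rightarrow> (real \<Rightarrow> 'a) set \<Rightarrow> (real \<Rightarrow> 'a) set" where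
  "gadd A B = cls_sm (\<lambda>e. rep A e + rep B e)"

definition gmult :: "(real \<Rightarrow> 'a::real_normed_field) set \<Rightarrow> (real \<Rightarrow> 'a) set \<Rightarrow> (real \<Rightarrow> 'a) set" where
  "gmult A B = cls_sm (\<lambda>e. rep A e * rep B e)"

definition tau_sm :: "(real \<Rightarrow> 'a::real_normed_vector) set \<Rightarrow> (real \<Rightarrow> 'a) set" where
  "tau_sm A = cls_co (rep A)"

definition tau_sm_inv :: "(real \<Rightarrow> 'a::real_normed_vector) set \<Rightarrow> (real \<Rightarrow> 'a) set" where
  "tau_sm_inv B = (THE A. A \<in> K_sm \<and> tau_sm A = B)"

definition gabs :: "(real \<Rightarrow> 'a::real_normed_field) set \<Rightarrow> (real \<Rightarrow> 'a) set" where
  "gabs A = tau_sm_inv (cls_co (\<lambda>e. of_real (norm (rep A e))))"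

text \<open>A real-valued representative of an element of R~_sm (viewed in K~_sm).\<close>
definition rrep :: "(real \<Rightarrow> 'a::real_normed_field) set \<Rightarrow> real \<Rightarrow> real" where
  "rrep A = (SOME f. (\<lambda>e. of_real (f e)) \<in> A)"

definition gsup :: "(real \<Rightarrow> 'a::real_normed_field) set \<Rightarrow> (real \<Rightarrow> 'a) set \<Rightarrow> (real \<Rightarrow> 'a) set" where
  "gsup a b = tau_sm_inv (cls_co (\<lambda>e. of_real (max (rrep a e) (rrep b e))))"

definition ginf :: "(real \<Rightarrow> 'a::real_normed_field) set \<Rightarrow> (real \<Rightarrow> 'a) set \<Rightarrow> (real \<Rightarrow> 'a) set" where
  "ginf a b = tau_sm_inv (cls_co (\<lambda>e. of_real (min (rrep a e) (rrep b e))))"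

definition principal :: "(real \<Rightarrow> 'a::real_normed_field) set \<Rightarrow> (real \<Rightarrow> 'a) set set" where
  "principal r = {gmult r x | x. x \<in> K_sm}"

definition ideal_sum :: "(real \<Rightarrow> 'a::real_normed_field) set set \<Rightarrow> (real \<Rightarrow> 'a) set set \<Rightarrow> (real \<Rightarrow> 'a) set set" where
  "ideal_sum I J = {gadd a b | a b. a \<in> I \<and> b \<in> J}"

end

theory Submission
  imports Defs
begin

text \<open>With the negligible net \<open>\<gamma>(\<epsilon>) = exp (-1/\<epsilon>)\<close>, the nets \<open>A = sqrt (\<bar>r\<bar>\<^sup>2 + \<gamma>\<^sup>2)\<close> and
  \<open>(a + b \<plusminus> sqrt ((a - b)\<^sup>2 + \<gamma>\<^sup>2)) / 2\<close> are smooth representatives of \<open>|r|\<close>, \<open>a \<or> b\<close> and \<open>a \<and> b\<close>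
  which stay above a multiple of \<open>\<gamma>\<close>, so dividing by them preserves moderateness.
  Since \<open>r cj(r) / A = A - \<gamma>\<^sup>2 / A\<close>, the nets \<open>r\<close> and \<open>A\<close> generate the same principal ideal:
  \<open>r x + s y = (A + B) ((r x + s y) / (A + B))\<close> with a bounded quotient, and conversely
  \<open>(A + B) z\<close> agrees with \<open>r (cj(r) z / A) + s (cj(s) z / B)\<close> up to \<open>(\<gamma>\<^sup>2/A + \<gamma>\<^sup>2/B) z\<close>.
  The nets \<open>A + B\<close> and \<open>A \<or> B\<close> have bounded ratio. For the intersection, \<open>m = A \<and> B\<close> divides
  \<open>r\<close> and \<open>s\<close>, and a common multiple \<open>r x = s y - n\<close> with \<open>n\<close> negligible is \<open>m z\<close> up to a
  negligible net for the regularized quotient \<open>z = r x m / (m\<^sup>2 + q\<^sup>2)\<close>, \<open>q = sqrt (\<bar>n\<bar>\<^sup>2 + \<gamma>\<^sup>2)\<close>.\<close>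

section \<open>Smooth nets\<close>

definition has_net_derivative :: "(real \<Rightarrow> 'a::real_normed_vector) \<Rightarrow> (real \<Rightarrow> 'a) \<Rightarrow> bool" where
  "has_net_derivative f f' \<longleftrightarrow> (\<forall>t\<in>Iset. (f has_vector_derivative f' t) (at t within Iset))"

lemma has_net_derivative_cong:
  assumes "has_net_derivative f f'" "\<And>t. t \<in> Iset \<Longrightarrow> f t = g t" "\<And>t. t \<in> Iset \<Longrightarrow> f' t = g' t"
  shows "has_net_derivative g g'"
  unfolding has_net_derivative_def
proof
  fix t assume t: "t \<in> Iset"
  have "(f has_vector_derivative f' t) (at t within Iset)"
    using assms(1) t by (auto simp: has_net_derivative_def)
  then have "(g has_vector_derivative f' t) (at t within Iset)"
    by (rule has_vector_derivative_transform_within[where d=1]) (use t assms(2) in auto)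
  then show "(g has_vector_derivative g' t) (at t within Iset)" using assms(3) t by simp
qed

lemma smooth_net_cong: "smooth_net f \<Longrightarrow> (\<And>t. t \<in> Iset \<Longrightarrow> f t = g t) \<Longrightarrow> smooth_net g"
  unfolding smooth_net_def by auto

lemma smooth_net_coinduct:
  assumes "P f" and step: "\<And>g. P g \<Longrightarrow> \<exists>g'. has_net_derivative g g' \<and> P g'"
  shows "smooth_net f"
proof -
  define next_deriv where "next_deriv g = (SOME g'. has_net_derivative g g' \<and> P g')" for g
  have next_deriv: "has_net_derivative g (next_deriv g) \<and> P (next_deriv g)" if "P g" for g
    using someI_ex[OF step[OF that]] by (simp add: next_deriv_def)
  define D where "D n = (next_deriv ^^ n) f" for n
  have "P (D n)" for n
    by (induction n) (auto simp: D_def assms(1) next_deriv)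
  then have "has_net_derivative (D n) (D (Suc n))" for n
    using next_deriv by (simp add: D_def)
  then show ?thesis unfolding smooth_net_def has_net_derivative_def
    by (intro exI[of _ D]) (auto simp: D_def)
qed

lemma smooth_net_has_net_derivative:
  assumes "smooth_net f" obtains f' where "has_net_derivative f f'" "smooth_net f'"
proof -
  obtain D where D0: "\<forall>t\<in>Iset. D 0 t = f t"
    and DS: "\<forall>n. \<forall>t\<in>Iset. (D n has_vector_derivative D (Suc n) t) (at t within Iset)"
    using assms unfolding smooth_net_def by blast
  have "has_net_derivative f (D 1)"
    by (rule has_net_derivative_cong[of "D 0" "D 1"]) (use DS D0 in \<open>auto simp: has_net_derivative_def\<close>)
  moreover have "smooth_net (D 1)" unfolding smooth_net_def
    by (intro exI[of _ "\<lambda>n. D (Suc n)"]) (use DS in auto)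
  ultimately show ?thesis by (rule that)
qed

definition net_deriv :: "(real \<Rightarrow> 'a::real_normed_vector) \<Rightarrow> real \<Rightarrow> 'a" where
  "net_deriv f = (SOME f'. has_net_derivative f f' \<and> smooth_net f')"

lemma net_deriv:
  assumes "smooth_net f" shows "has_net_derivative f (net_deriv f)" "smooth_net (net_deriv f)"
proof -
  have "\<exists>f'. has_net_derivative f f' \<and> smooth_net f'"
    using smooth_net_has_net_derivative[OF assms] by blast
  then have "has_net_derivative f (net_deriv f) \<and> smooth_net (net_deriv f)"
    unfolding net_deriv_def by (rule someI_ex)
  then show "has_net_derivative f (net_deriv f)" "smooth_net (net_deriv f)" by auto
qed

lemma net_deriv_at:
  "smooth_net f \<Longrightarrow> t \<in> Iset \<Longrightarrow> (f has_vector_derivative net_deriv f t) (at t within Iset)"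
  using net_deriv(1) by (auto simp: has_net_derivative_def)

lemma smooth_net_const: "smooth_net (\<lambda>t. c)"
  unfolding smooth_net_def by (intro exI[of _ "\<lambda>n t. if n = 0 then c else 0"]) auto

lemma smooth_net_ident: "smooth_net (\<lambda>t::real. t)"
  unfolding smooth_net_def
  by (intro exI[of _ "\<lambda>n t. if n = 0 then t else if n = 1 then 1 else 0"]) auto

lemma smooth_net_add:
  assumes "smooth_net f" "smooth_net g" shows "smooth_net (\<lambda>t. f t + g t)"
proof -
  obtain D where "\<forall>t\<in>Iset. D 0 t = f t"
    and "\<forall>n. \<forall>t\<in>Iset. (D n has_vector_derivative D (Suc n) t) (at t within Iset)"
    using assms(1) unfolding smooth_net_def by blast
  moreover obtain E where "\<forall>t\<in>Iset. E 0 t = g t"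
    and "\<forall>n. \<forall>t\<in>Iset. (E n has_vector_derivative E (Suc n) t) (at t within Iset)"
    using assms(2) unfolding smooth_net_def by blast
  ultimately show ?thesis unfolding smooth_net_def
    by (intro exI[of _ "\<lambda>n t. D n t + E n t"]) (auto intro!: has_vector_derivative_add)
qed

lemma smooth_net_bounded_linear:
  assumes "bounded_linear L" "smooth_net f" shows "smooth_net (\<lambda>t. L (f t))"
proof -
  obtain D where "\<forall>t\<in>Iset. D 0 t = f t"
    and "\<forall>n. \<forall>t\<in>Iset. (D n has_vector_derivative D (Suc n) t) (at t within Iset)"
    using assms(2) unfolding smooth_net_def by blast
  then show ?thesis unfolding smooth_net_def
    by (intro exI[of _ "\<lambda>n t. L (D n t)"])
      (auto intro!: bounded_linear.has_vector_derivative[OF assms(1)])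
qed

lemma smooth_net_minus: "smooth_net f \<Longrightarrow> smooth_net (\<lambda>t. - f t)"
  by (rule smooth_net_bounded_linear[OF bounded_linear_minus[OF bounded_linear_ident]])

lemma smooth_net_diff: "smooth_net f \<Longrightarrow> smooth_net g \<Longrightarrow> smooth_net (\<lambda>t. f t - g t)"
  using smooth_net_add[of f "\<lambda>t. - g t"] smooth_net_minus[of g] by simp

lemma smooth_net_of_real:
  "smooth_net f \<Longrightarrow> smooth_net (\<lambda>t. of_real (f t) :: 'a::real_normed_algebra_1)"
  by (rule smooth_net_bounded_linear[OF bounded_linear_of_real])

inductive_set net_algebra :: "(real \<Rightarrow> 'a::real_normed_algebra) set \<Rightarrow> (real \<Rightarrow> 'a) set"
  for G :: "(real \<Rightarrow> 'a) set" where
  generator: "g \<in> G \<Longrightarrow> g \<in> net_algebra G"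
| add: "a \<in> net_algebra G \<Longrightarrow> b \<in> net_algebra G \<Longrightarrow> (\<lambda>t. a t + b t) \<in> net_algebra G"
| mult: "a \<in> net_algebra G \<Longrightarrow> b \<in> net_algebra G \<Longrightarrow> (\<lambda>t. a t * b t) \<in> net_algebra G"

lemma smooth_net_algebra:
  assumes G: "\<And>g. g \<in> G \<Longrightarrow> \<exists>g'. has_net_derivative g g' \<and> g' \<in> net_algebra G"
    and a: "a \<in> net_algebra G"
  shows "smooth_net a"
  using a
proof (rule smooth_net_coinduct)
  fix a assume "a \<in> net_algebra G"
  then show "\<exists>a'. has_net_derivative a a' \<and> a' \<in> net_algebra G"
  proof induction
    case (generator g)
    then show ?case by (rule G)
  next
    case (add a b)
    then obtain a' b' where "has_net_derivative a a'" "has_net_derivative b b'"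
      "a' \<in> net_algebra G" "b' \<in> net_algebra G" by blast
    then show ?case
      by (intro exI[of _ "\<lambda>t. a' t + b' t"])
        (auto simp: has_net_derivative_def intro!: has_vector_derivative_add net_algebra.add)
  next
    case (mult a b)
    then obtain a' b' where "has_net_derivative a a'" "has_net_derivative b b'"
      "a' \<in> net_algebra G" "b' \<in> net_algebra G" by blast
    with mult.hyps show ?case
      by (intro exI[of _ "\<lambda>t. a t * b' t + a' t * b t"])
        (auto simp: has_net_derivative_def intro!: has_vector_derivative_mult net_algebra.add net_algebra.mult)
  qed
qed

lemma smooth_net_mult:
  fixes f g :: "real \<Rightarrow> 'a::real_normed_algebra"
  assumes "smooth_net f" "smooth_net g" shows "smooth_net (\<lambda>t. f t * g t)"
proof (rule smooth_net_algebra[where G="Collect smooth_net"])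
  show "\<exists>g'. has_net_derivative g g' \<and> g' \<in> net_algebra (Collect smooth_net)"
    if "g \<in> Collect smooth_net" for g :: "real \<Rightarrow> 'a"
    using net_deriv[of g] that by (auto intro: net_algebra.generator)
  show "(\<lambda>t. f t * g t) \<in> net_algebra (Collect smooth_net)"
    using assms by (auto intro: net_algebra.generator net_algebra.mult)
qed

lemma smooth_net_compose:
  fixes f :: "real \<Rightarrow> real"
  assumes f: "smooth_net f" "\<And>t. t \<in> Iset \<Longrightarrow> f t \<in> U"
    and H: "\<And>h. h \<in> H \<Longrightarrow> \<exists>h'\<in>H. \<forall>x\<in>U. (h has_real_derivative h' x) (at x)"
    and h: "h \<in> H"
  shows "smooth_net (\<lambda>t. h (f t))"
proof (rule smooth_net_algebra[where G="Collect smooth_net \<union> (\<lambda>h t. h (f t)) ` H"])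
  let ?A = "net_algebra (Collect smooth_net \<union> (\<lambda>h t. h (f t)) ` H)"
  fix g assume "g \<in> Collect smooth_net \<union> (\<lambda>h t. h (f t)) ` H"
  then show "\<exists>g'. has_net_derivative g g' \<and> g' \<in> ?A"
  proof
    assume "g \<in> Collect smooth_net"
    then show ?thesis using net_deriv[of g] by (auto intro: net_algebra.generator)
  next
    assume "g \<in> (\<lambda>h t. h (f t)) ` H"
    then obtain h where h: "h \<in> H" and g: "g = (\<lambda>t. h (f t))" by blast
    obtain h' where h': "h' \<in> H" "\<And>x. x \<in> U \<Longrightarrow> (h has_real_derivative h' x) (at x)"
      using H[OF h] by blast
    have "((\<lambda>t. h (f t)) has_real_derivative h' (f t) * net_deriv f t) (at t within Iset)"
      if "t \<in> Iset" for t
      using DERIV_chain2[OF h'(2) net_deriv_at[OF f(1) that, folded has_real_derivative_iff_has_vector_derivative]]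
        f(2)[OF that] .
    then have "has_net_derivative g (\<lambda>t. h' (f t) * net_deriv f t)"
      by (simp add: has_net_derivative_def g has_real_derivative_iff_has_vector_derivative)
    moreover have "(\<lambda>t. h' (f t) * net_deriv f t) \<in> ?A"
      by (rule net_algebra.mult; rule net_algebra.generator) (use h' net_deriv(2)[OF f(1)] in auto)
    ultimately show ?thesis by blast
  qed
next
  show "(\<lambda>t. h (f t)) \<in> net_algebra (Collect smooth_net \<union> (\<lambda>h t. h (f t)) ` H)"
    using h by (auto intro: net_algebra.generator)
qed

lemma smooth_net_powr:
  fixes f :: "real \<Rightarrow> real"
  assumes "smooth_net f" "\<And>t. t \<in> Iset \<Longrightarrow> f t > 0"
  shows "smooth_net (\<lambda>t. f t powr p)"
proof -
  let ?H = "range (\<lambda>(c, q) x::real. c * x powr q)"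
  have "smooth_net (\<lambda>t. (\<lambda>x. 1 * x powr p) (f t))"
  proof (rule smooth_net_compose[where U="{0<..}" and H="?H" and f=f and h="\<lambda>x. 1 * x powr p"])
    fix h assume "h \<in> ?H"
    then obtain c q where h: "h = (\<lambda>x. c * x powr q)" by auto
    show "\<exists>h'\<in>?H. \<forall>x\<in>{0<..}. (h has_real_derivative h' x) (at x)"
      by (rule bexI[of _ "\<lambda>x. (c * q) * x powr (q - 1)"], unfold h)
        (auto intro!: derivative_eq_intros)
  next
    show "(\<lambda>x. 1 * x powr p) \<in> ?H" by (rule range_eqI[of _ _ "(1, p)"]) simp
  qed (use assms in auto)
  then show ?thesis by simp
qed

lemma smooth_net_exp: "smooth_net (f :: real \<Rightarrow> real) \<Longrightarrow> smooth_net (\<lambda>t. exp (f t))"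
  by (rule smooth_net_compose[where U=UNIV and H="{exp}" and h=exp]) (auto intro: DERIV_exp)

lemma smooth_net_sqrt:
  fixes f :: "real \<Rightarrow> real"
  assumes "smooth_net f" "\<And>t. t \<in> Iset \<Longrightarrow> f t > 0"
  shows "smooth_net (\<lambda>t. sqrt (f t))"
  using smooth_net_powr[of f "1/2", OF assms]
  by (rule smooth_net_cong) (auto simp: powr_half_sqrt dest: assms(2))

lemma smooth_net_inverse:
  fixes f :: "real \<Rightarrow> real"
  assumes "smooth_net f" "\<And>t. t \<in> Iset \<Longrightarrow> f t > 0"
  shows "smooth_net (\<lambda>t. 1 / f t)"
  using smooth_net_powr[of f "-1", OF assms]
  by (rule smooth_net_cong) (auto simp: powr_neg_one dest: assms(2))

section \<open>Moderate and negligible nets\<close>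

lemma eventually_at_right_0_less_1: "eventually (\<lambda>e::real. 0 < e \<and> e < 1) (at_right 0)"
proof -
  have "eventually (\<lambda>e::real. e < 1) (at_right 0)"
    unfolding eventually_at_right[OF zero_less_one] by (intro exI[of _ 1]) auto
  with eventually_at_right_less[of 0] show ?thesis by eventually_elim simp
qed

lemma moderate_netE:
  assumes "moderate_net f"
  obtains N :: nat and C where "C \<ge> 0" "eventually (\<lambda>e. norm (f e) \<le> C * (1 / e) ^ N) (at_right 0)"
proof -
  obtain N C where ev: "eventually (\<lambda>e. norm (f e) \<le> C * (1 / e) ^ N) (at_right 0)"
    using assms by (auto simp: moderate_net_def)
  have "eventually (\<lambda>e. norm (f e) \<le> \<bar>C\<bar> * (1 / e) ^ N) (at_right 0)"
    using ev eventually_at_right_less[of 0]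
  proof eventually_elim
    case (elim e)
    have "C * (1 / e) ^ N \<le> \<bar>C\<bar> * (1 / e) ^ N" using elim by (intro mult_right_mono) auto
    with elim show ?case by linarith
  qed
  then show ?thesis by (rule that[rotated]) simp
qed

lemma moderate_net_le:
  assumes "moderate_net f" "eventually (\<lambda>e. norm (g e) \<le> norm (f e)) (at_right 0)"
  shows "moderate_net g"
proof -
  obtain N C where "eventually (\<lambda>e. norm (f e) \<le> C * (1 / e) ^ N) (at_right 0)"
    using assms(1) by (auto simp: moderate_net_def)
  with assms(2) have "eventually (\<lambda>e. norm (g e) \<le> C * (1 / e) ^ N) (at_right 0)"
    by eventually_elim auto
  then show ?thesis by (auto simp: moderate_net_def)
qed

lemma negligible_net_le:
  assumes "negligible_net f" "eventually (\<lambda>e. norm (g e) \<le> norm (f e)) (at_right 0)"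
  shows "negligible_net g"
  unfolding negligible_net_def
proof
  fix m
  obtain C where "eventually (\<lambda>e. norm (f e) \<le> C * e ^ m) (at_right 0)"
    using assms(1) by (auto simp: negligible_net_def)
  with assms(2) have "eventually (\<lambda>e. norm (g e) \<le> C * e ^ m) (at_right 0)"
    by eventually_elim auto
  then show "\<exists>C. eventually (\<lambda>e. norm (g e) \<le> C * e ^ m) (at_right 0)" by blast
qed

lemma moderate_net_bounded:
  fixes k :: "real \<Rightarrow> real"
  assumes "moderate_net k" "\<And>e. e > 0 \<Longrightarrow> norm (g e) \<le> k e"
  shows "moderate_net g"
proof (rule moderate_net_le[OF assms(1)])
  show "eventually (\<lambda>e. norm (g e) \<le> norm (k e)) (at_right 0)"
    using eventually_at_right_less[of 0]
  proof eventually_elim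
    case (elim e)
    show ?case using assms(2)[OF elim] abs_ge_self[of "k e"] by simp
  qed
qed

lemma negligible_net_bounded:
  fixes k :: "real \<Rightarrow> real"
  assumes "negligible_net k" "\<And>e. e > 0 \<Longrightarrow> norm (g e) \<le> k e"
  shows "negligible_net g"
proof (rule negligible_net_le[OF assms(1)])
  show "eventually (\<lambda>e. norm (g e) \<le> norm (k e)) (at_right 0)"
    using eventually_at_right_less[of 0]
  proof eventually_elim
    case (elim e)
    show ?case using assms(2)[OF elim] abs_ge_self[of "k e"] by simp
  qed
qed

lemma moderate_net_norm: "moderate_net f \<Longrightarrow> moderate_net (\<lambda>e. norm (f e))"
  by (rule moderate_net_le) auto

lemma negligible_net_norm: "negligible_net f \<Longrightarrow> negligible_net (\<lambda>e. norm (f e))"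
  by (rule negligible_net_le) auto

lemma moderate_net_const: "moderate_net (\<lambda>e. c)"
  unfolding moderate_net_def by (intro exI[of _ 0] exI[of _ "norm c"]) auto

lemma negligible_net_zero: "negligible_net (\<lambda>e. 0)"
  unfolding negligible_net_def by (auto intro!: exI[of _ 0])

lemma negligible_imp_moderate_net: "negligible_net f \<Longrightarrow> moderate_net f"
  unfolding negligible_net_def moderate_net_def
  by (erule allE[of _ 0]) (intro exI[of _ "0::nat"], simp)

lemma moderate_net_add:
  assumes "moderate_net f" "moderate_net g"
  shows "moderate_net (\<lambda>e. f e + g e)"
proof -
  obtain N C where C: "C \<ge> 0" and f: "eventually (\<lambda>e. norm (f e) \<le> C * (1 / e) ^ N) (at_right 0)"
    using assms(1) by (rule moderate_netE)
  obtain N' C' where C': "C' \<ge> 0" and g: "eventually (\<lambda>e. norm (g e) \<le> C' * (1 / e) ^ N') (at_right 0)"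
    using assms(2) by (rule moderate_netE)
  have "eventually (\<lambda>e. norm (f e + g e) \<le> (C + C') * (1 / e) ^ max N N') (at_right 0)"
    using f g eventually_at_right_0_less_1
  proof eventually_elim
    case (elim e)
    then have "(1/e)^N \<le> (1/e)^max N N'" "(1/e)^N' \<le> (1/e)^max N N'"
      by (auto intro!: power_increasing)
    with C C' have "C * (1/e)^N \<le> C * (1/e)^max N N'" "C' * (1/e)^N' \<le> C' * (1/e)^max N N'"
      by (auto intro: mult_left_mono)
    with elim norm_triangle_ineq[of "f e" "g e"] show ?case by (simp add: algebra_simps)
  qed
  then show ?thesis by (auto simp: moderate_net_def)
qed

lemma negligible_net_add:
  assumes "negligible_net f" "negligible_net g"
  shows "negligible_net (\<lambda>e. f e + g e)"
  unfolding negligible_net_def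
proof
  fix m
  obtain C C' where "eventually (\<lambda>e. norm (f e) \<le> C * e ^ m) (at_right 0)"
    "eventually (\<lambda>e. norm (g e) \<le> C' * e ^ m) (at_right 0)"
    using assms unfolding negligible_net_def by meson
  then have "eventually (\<lambda>e. norm (f e + g e) \<le> (C + C') * e ^ m) (at_right 0)"
    by eventually_elim (use norm_triangle_ineq in \<open>smt (verit) distrib_right\<close>)
  then show "\<exists>C. eventually (\<lambda>e. norm (f e + g e) \<le> C * e ^ m) (at_right 0)" by blast
qed

lemma negligible_net_minus: "negligible_net f \<Longrightarrow> negligible_net (\<lambda>e. - f e)"
  unfolding negligible_net_def by simp

lemma moderate_net_mult:
  fixes f g :: "real \<Rightarrow> 'a::real_normed_algebra"
  assumes "moderate_net f" "moderate_net g"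
  shows "moderate_net (\<lambda>e. f e * g e)"
proof -
  obtain N N' C C' where "eventually (\<lambda>e. norm (f e) \<le> C * (1 / e) ^ N) (at_right 0)"
    "eventually (\<lambda>e. norm (g e) \<le> C' * (1 / e) ^ N') (at_right 0)"
    using assms by (auto simp: moderate_net_def)
  then have "eventually (\<lambda>e. norm (f e * g e) \<le> (C * C') * (1 / e) ^ (N + N')) (at_right 0)"
  proof eventually_elim
    case (elim e)
    have "norm (f e * g e) \<le> norm (f e) * norm (g e)" by (rule norm_mult_ineq)
    also have "\<dots> \<le> (C * (1 / e) ^ N) * (C' * (1 / e) ^ N')"
      using elim by (intro mult_mono) (auto intro: order_trans[OF norm_ge_zero])
    finally show ?case by (simp add: power_add algebra_simps)
  qed
  then show ?thesis by (auto simp: moderate_net_def)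
qed

lemma negligible_net_mult:
  fixes f g :: "real \<Rightarrow> 'a::real_normed_algebra"
  assumes "negligible_net f" "moderate_net g"
  shows "negligible_net (\<lambda>e. f e * g e)"
  unfolding negligible_net_def
proof
  fix m
  obtain N C' where g: "eventually (\<lambda>e. norm (g e) \<le> C' * (1 / e) ^ N) (at_right 0)"
    using assms(2) by (auto simp: moderate_net_def)
  obtain C where "eventually (\<lambda>e. norm (f e) \<le> C * e ^ (m + N)) (at_right 0)"
    using assms(1) by (auto simp: negligible_net_def)
  with g have "eventually (\<lambda>e. norm (f e * g e) \<le> (C * C') * e ^ m) (at_right 0)"
    using eventually_at_right_less[of 0]
  proof eventually_elim
    case (elim e)
    have "norm (f e * g e) \<le> norm (f e) * norm (g e)" by (rule norm_mult_ineq)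
    also have "\<dots> \<le> (C * e ^ (m + N)) * (C' * (1 / e) ^ N)"
      using elim by (intro mult_mono) (auto intro: order_trans[OF norm_ge_zero])
    also have "\<dots> = (C * C') * e ^ m"
      using elim by (simp add: power_add power_one_over field_simps)
    finally show ?case .
  qed
  then show "\<exists>C. eventually (\<lambda>e. norm (f e * g e) \<le> C * e ^ m) (at_right 0)" by blast
qed

lemma negligible_net_mult_left:
  fixes f g :: "real \<Rightarrow> 'a::real_normed_field"
  assumes "moderate_net f" "negligible_net g"
  shows "negligible_net (\<lambda>e. f e * g e)"
  using negligible_net_mult[OF assms(2,1)] by (simp add: mult.commute)

lemma negligible_net_of_real:
  "negligible_net f \<Longrightarrow> negligible_net (\<lambda>e. of_real (f e) :: 'a::real_normed_algebra_1)"
  by (rule negligible_net_le) auto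

lemma power_div_fact_le_exp:
  fixes x :: real assumes "x \<ge> 0" shows "x ^ m / fact m \<le> exp x"
proof -
  have "x ^ m / fact m \<le> (\<Sum>n\<le>m. x ^ n / fact n)"
    by (rule member_le_sum[where f="\<lambda>n. x ^ n / fact n"]) (use assms in auto)
  also have "\<dots> \<le> exp x"
    using assms summable_exp_generic[of x]
    by (auto simp: exp_def divide_inverse ac_simps intro!: sum_le_suminf)
  finally show ?thesis .
qed

lemma negligible_net_exp_neg_inverse: "negligible_net (\<lambda>e::real. exp (- 1 / e))"
  unfolding negligible_net_def
proof
  fix m
  have "eventually (\<lambda>e. norm (exp (- 1 / e)) \<le> fact m * e ^ m) (at_right 0)"
    using eventually_at_right_less[of 0]
  proof eventually_elim
    case (elim e)
    have "(1/e) ^ m / fact m \<le> exp (1/e)"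
      using elim by (intro power_div_fact_le_exp) simp
    then have "1 \<le> fact m * e ^ m * exp (1/e)"
      using elim by (simp add: power_one_over field_simps)
    then show ?case by (simp add: exp_minus field_simps)
  qed
  then show "\<exists>C. eventually (\<lambda>e. norm (exp (- 1 / e)) \<le> C * e ^ m) (at_right 0)" by blast
qed

section \<open>Arithmetic and principal ideals in the quotient ring\<close>

lemma EM_smD: "f \<in> EM_sm \<Longrightarrow> smooth_net f" "f \<in> EM_sm \<Longrightarrow> moderate_net f"
  by (simp_all add: EM_sm_def)

lemma EM_sm_add: "f \<in> EM_sm \<Longrightarrow> g \<in> EM_sm \<Longrightarrow> (\<lambda>e. f e + g e) \<in> EM_sm"
  by (auto simp: EM_sm_def intro: smooth_net_add moderate_net_add)

lemma EM_sm_mult: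
  fixes f g :: "real \<Rightarrow> 'a::real_normed_algebra"
  shows "f \<in> EM_sm \<Longrightarrow> g \<in> EM_sm \<Longrightarrow> (\<lambda>e. f e * g e) \<in> EM_sm"
  by (auto simp: EM_sm_def intro: smooth_net_mult moderate_net_mult)

lemma EM_sm_of_real:
  "smooth_net f \<Longrightarrow> moderate_net f \<Longrightarrow> (\<lambda>e. of_real (f e) :: 'a::real_normed_algebra_1) \<in> EM_sm"
  by (auto simp: EM_sm_def intro: smooth_net_of_real elim!: moderate_net_le)

lemma EM_sm_subset_EM_co: "f \<in> EM_sm \<Longrightarrow> f \<in> EM_co"
  using net_deriv(1)[of f]
  by (auto simp: EM_sm_def EM_co_def has_net_derivative_def intro!: continuous_on_vector_derivative)

lemma negligible_net_diff_trans:
  "negligible_net (\<lambda>e. f e - g e) \<Longrightarrow> negligible_net (\<lambda>e. g e - h e) \<Longrightarrow> negligible_net (\<lambda>e. f e - h e)"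
  using negligible_net_add[of "\<lambda>e. f e - g e" "\<lambda>e. g e - h e"] by simp

lemma negligible_net_diff_commute:
  "negligible_net (\<lambda>e. f e - g e) \<Longrightarrow> negligible_net (\<lambda>e. g e - f e)"
  using negligible_net_minus[of "\<lambda>e. f e - g e"] by simp

lemma cls_sm_eqI: "negligible_net (\<lambda>e. f e - g e) \<Longrightarrow> cls_sm f = cls_sm g"
  unfolding cls_sm_def by (auto intro: negligible_net_diff_trans negligible_net_diff_commute)

lemma cls_co_eqI: "negligible_net (\<lambda>e. f e - g e) \<Longrightarrow> cls_co f = cls_co g"
  unfolding cls_co_def by (auto intro: negligible_net_diff_trans negligible_net_diff_commute)

lemma cls_sm_self: "f \<in> EM_sm \<Longrightarrow> f \<in> cls_sm f"
  unfolding cls_sm_def using negligible_net_zero by auto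

lemma cls_sm_eqD: "cls_sm f = cls_sm g \<Longrightarrow> f \<in> EM_sm \<Longrightarrow> negligible_net (\<lambda>e. f e - g e)"
  using cls_sm_self unfolding cls_sm_def by blast

lemma cls_sm_in_K_sm: "f \<in> EM_sm \<Longrightarrow> cls_sm f \<in> K_sm"
  by (simp add: K_sm_def)

lemma rep_cls_sm:
  assumes "f \<in> EM_sm"
  shows "rep (cls_sm f) \<in> EM_sm" "negligible_net (\<lambda>e. rep (cls_sm f) e - f e)"
proof -
  have "rep (cls_sm f) \<in> cls_sm f"
    unfolding rep_def using cls_sm_self[OF assms] by (rule someI[where P="\<lambda>g. g \<in> cls_sm f"])
  then show "rep (cls_sm f) \<in> EM_sm" "negligible_net (\<lambda>e. rep (cls_sm f) e - f e)"
    by (auto simp: cls_sm_def)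
qed

lemma K_smE:
  assumes "A \<in> K_sm"
  obtains "rep A \<in> EM_sm" "A = cls_sm (rep A)"
proof
  obtain f where f: "f \<in> EM_sm" "A = cls_sm f" using assms by (auto simp: K_sm_def)
  then show "rep A \<in> EM_sm" "A = cls_sm (rep A)"
    using rep_cls_sm[OF f(1)] cls_sm_eqI by auto
qed

lemma gadd_cls_sm:
  fixes f g :: "real \<Rightarrow> 'a::real_normed_field"
  assumes "f \<in> EM_sm" "g \<in> EM_sm"
  shows "gadd (cls_sm f) (cls_sm g) = cls_sm (\<lambda>e. f e + g e)"
  unfolding gadd_def
proof (rule cls_sm_eqI)
  have "negligible_net (\<lambda>e. (rep (cls_sm f) e - f e) + (rep (cls_sm g) e - g e))"
    using assms by (intro negligible_net_add rep_cls_sm)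
  then show "negligible_net (\<lambda>e. rep (cls_sm f) e + rep (cls_sm g) e - (f e + g e))"
    by (simp add: algebra_simps)
qed

lemma gmult_cls_sm:
  fixes f g :: "real \<Rightarrow> 'a::real_normed_field"
  assumes f: "f \<in> EM_sm" and g: "g \<in> EM_sm"
  shows "gmult (cls_sm f) (cls_sm g) = cls_sm (\<lambda>e. f e * g e)"
  unfolding gmult_def
proof (rule cls_sm_eqI)
  define f' g' where "f' = rep (cls_sm f)" and "g' = rep (cls_sm g)"
  note f' = rep_cls_sm[OF f, folded f'_def] and g' = rep_cls_sm[OF g, folded g'_def]
  have "negligible_net (\<lambda>e. (f' e - f e) * g' e + f e * (g' e - g e))"
    using f g f' g'
    by (intro negligible_net_add negligible_net_mult negligible_net_mult_left) (auto dest: EM_smD)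
  then show "negligible_net (\<lambda>e. f' e * g' e - f e * g e)"
    by (simp add: algebra_simps)
qed

lemma principal_cls_sm:
  fixes f :: "real \<Rightarrow> 'a::real_normed_field"
  assumes "f \<in> EM_sm"
  shows "principal (cls_sm f) = {cls_sm (\<lambda>e. f e * x e) | x. x \<in> EM_sm}"
  unfolding principal_def K_sm_def using gmult_cls_sm[OF assms] by auto

lemma principal_cls_smE:
  fixes f :: "real \<Rightarrow> 'a::real_normed_field"
  assumes "f \<in> EM_sm" "X \<in> principal (cls_sm f)"
  obtains x where "x \<in> EM_sm" "X = cls_sm (\<lambda>e. f e * x e)"
  using assms by (auto simp: principal_cls_sm)

lemma ideal_sum_principal_cls_sm:
  fixes f g :: "real \<Rightarrow> 'a::real_normed_field"
  assumes f: "f \<in> EM_sm" and g: "g \<in> EM_sm"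
  shows "ideal_sum (principal (cls_sm f)) (principal (cls_sm g)) =
    {cls_sm (\<lambda>e. f e * x e + g e * y e) | x y. x \<in> EM_sm \<and> y \<in> EM_sm}"
  unfolding ideal_sum_def principal_cls_sm[OF f] principal_cls_sm[OF g]
  using gadd_cls_sm[OF EM_sm_mult[OF f] EM_sm_mult[OF g]] by blast

lemma ideal_sum_mono: "I \<subseteq> I' \<Longrightarrow> J \<subseteq> J' \<Longrightarrow> ideal_sum I J \<subseteq> ideal_sum I' J'"
  by (auto simp: ideal_sum_def)

lemma ideal_sum_principal_self_subset:
  fixes f :: "real \<Rightarrow> 'a::real_normed_field"
  assumes "f \<in> EM_sm"
  shows "ideal_sum (principal (cls_sm f)) (principal (cls_sm f)) \<subseteq> principal (cls_sm f)"
proof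
  fix X assume "X \<in> ideal_sum (principal (cls_sm f)) (principal (cls_sm f))"
  then obtain x y where "x \<in> EM_sm" "y \<in> EM_sm" "X = cls_sm (\<lambda>e. f e * (x e + y e))"
    unfolding ideal_sum_principal_cls_sm[OF assms assms] by (auto simp: distrib_left)
  then show "X \<in> principal (cls_sm f)"
    unfolding principal_cls_sm[OF assms] by (auto intro!: exI[of _ "\<lambda>e. x e + y e"] EM_sm_add)
qed

lemma principal_cls_sm_subset:
  fixes f g u :: "real \<Rightarrow> 'a::real_normed_field"
  assumes f: "f \<in> EM_sm" and g: "g \<in> EM_sm" and u: "u \<in> EM_sm"
    and fgu: "negligible_net (\<lambda>e. f e - g e * u e)"
  shows "principal (cls_sm f) \<subseteq> principal (cls_sm g)"
proof
  fix X assume "X \<in> principal (cls_sm f)"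
  then obtain x where x: "x \<in> EM_sm" and X: "X = cls_sm (\<lambda>e. f e * x e)"
    using principal_cls_sm[OF f] by auto
  have "negligible_net (\<lambda>e. (f e - g e * u e) * x e)"
    using fgu x by (intro negligible_net_mult) (auto dest: EM_smD)
  then have "X = cls_sm (\<lambda>e. g e * (u e * x e))"
    unfolding X by (intro cls_sm_eqI) (simp add: algebra_simps)
  then show "X \<in> principal (cls_sm g)"
    using principal_cls_sm[OF g] EM_sm_mult[OF u x] by auto
qed

lemma tau_sm_inv_cls_co:
  assumes g: "g \<in> EM_sm" and gh: "negligible_net (\<lambda>e. g e - h e)"
  shows "tau_sm_inv (cls_co h) = cls_sm g"
  unfolding tau_sm_inv_def
proof (rule the_equality)
  have "negligible_net (\<lambda>e. rep (cls_sm g) e - h e)"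
    using rep_cls_sm(2)[OF g] gh by (rule negligible_net_diff_trans)
  then show "cls_sm g \<in> K_sm \<and> tau_sm (cls_sm g) = cls_co h"
    using cls_sm_in_K_sm[OF g] cls_co_eqI by (auto simp: tau_sm_def)
next
  fix A assume A: "A \<in> K_sm \<and> tau_sm A = cls_co h"
  then have rA: "rep A \<in> EM_sm" "A = cls_sm (rep A)" by (auto elim: K_smE)
  have "rep A \<in> cls_co (rep A)"
    using EM_sm_subset_EM_co[OF rA(1)] negligible_net_zero by (auto simp: cls_co_def)
  then have "rep A \<in> cls_co h" using A by (simp add: tau_sm_def)
  then have "negligible_net (\<lambda>e. rep A e - h e)" by (simp add: cls_co_def)
  then have "negligible_net (\<lambda>e. rep A e - g e)"
    using gh by (blast intro: negligible_net_diff_trans negligible_net_diff_commute)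
  then show "A = cls_sm g" using rA(2) cls_sm_eqI by metis
qed

lemma rrep_cls_sm:
  fixes f :: "real \<Rightarrow> real"
  assumes f: "(\<lambda>e. of_real (f e) :: 'a::real_normed_field) \<in> EM_sm"
  shows "negligible_net (\<lambda>e. rrep (cls_sm (\<lambda>e. of_real (f e) :: 'a)) e - f e)"
proof -
  define f' where "f' = rrep (cls_sm (\<lambda>e. of_real (f e) :: 'a))"
  have "(\<lambda>e. of_real (f' e) :: 'a) \<in> cls_sm (\<lambda>e. of_real (f e))"
    unfolding f'_def rrep_def by (rule someI[of _ f]) (rule cls_sm_self[OF f])
  then have "negligible_net (\<lambda>e. (of_real (f' e) :: 'a) - of_real (f e))"
    by (simp add: cls_sm_def)
  then show ?thesis unfolding f'_def[symmetric]
    by (rule negligible_net_le) (simp flip: of_real_diff)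
qed

section \<open>Smooth regularizations of absolute value, maximum and minimum\<close>

definition gamma_net :: "real \<Rightarrow> real" where
  "gamma_net e = exp (- 1 / e)"

lemma gamma_net_pos: "gamma_net e > 0"
  by (simp add: gamma_net_def)

lemma negligible_gamma_net: "negligible_net gamma_net"
  using negligible_net_exp_neg_inverse by (simp add: gamma_net_def[abs_def])

lemma smooth_gamma_net: "smooth_net gamma_net"
proof -
  have "smooth_net (\<lambda>e::real. e powr -1)"
    by (rule smooth_net_powr[OF smooth_net_ident]) (auto simp: Iset_def)
  then have "smooth_net (\<lambda>e. exp ((-1) * e powr -1))"
    by (intro smooth_net_exp smooth_net_mult smooth_net_const)
  then show ?thesis by (rule smooth_net_cong) (auto simp: Iset_def gamma_net_def powr_neg_one)
qed

definition smooth_norm :: "(real \<Rightarrow> 'a::real_normed_vector) \<Rightarrow> real \<Rightarrow> real" where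
  "smooth_norm R e = sqrt ((norm (R e))\<^sup>2 + (gamma_net e)\<^sup>2)"

lemma smooth_norm_bounds:
  shows norm_le_smooth_norm: "norm (R e) \<le> smooth_norm R e"
    and gamma_net_le_smooth_norm: "gamma_net e \<le> smooth_norm R e"
    and smooth_norm_le: "smooth_norm R e \<le> norm (R e) + gamma_net e"
    and smooth_norm_pos: "smooth_norm R e > 0"
    and smooth_norm_power2: "(smooth_norm R e)\<^sup>2 = (norm (R e))\<^sup>2 + (gamma_net e)\<^sup>2"
proof -
  have pos: "(norm (R e))\<^sup>2 + (gamma_net e)\<^sup>2 > 0"
    using gamma_net_pos[of e] by (simp add: add_nonneg_pos)
  show "norm (R e) \<le> smooth_norm R e" "gamma_net e \<le> smooth_norm R e"
    "smooth_norm R e > 0" "(smooth_norm R e)\<^sup>2 = (norm (R e))\<^sup>2 + (gamma_net e)\<^sup>2"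
    using pos by (auto simp: smooth_norm_def real_le_rsqrt)
  show "smooth_norm R e \<le> norm (R e) + gamma_net e"
    using gamma_net_pos[of e] by (auto simp: smooth_norm_def power2_eq_square algebra_simps intro!: real_le_lsqrt)
qed

lemma moderate_net_smooth_normI:
  assumes "moderate_net R" shows "moderate_net (smooth_norm R)"
proof (rule moderate_net_bounded)
  show "moderate_net (\<lambda>e. norm (R e) + gamma_net e)"
    using assms negligible_imp_moderate_net[OF negligible_gamma_net]
    by (intro moderate_net_add moderate_net_norm)
  show "norm (smooth_norm R e) \<le> norm (R e) + gamma_net e" for e
    using smooth_norm_le[of R e] smooth_norm_pos[of R e] by simp
qed

lemma smooth_net_smooth_normI:
  "smooth_net (\<lambda>e. (norm (R e))\<^sup>2) \<Longrightarrow> smooth_net (smooth_norm R)"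
  unfolding smooth_norm_def[abs_def] power2_eq_square[of "gamma_net _"]
  by (intro smooth_net_sqrt smooth_net_add smooth_net_mult smooth_gamma_net)
    (use smooth_norm_pos[of R] in \<open>simp_all add: smooth_norm_def power2_eq_square\<close>)

lemma gamma_net_power2_div_le: "gamma_net e \<le> A \<Longrightarrow> (gamma_net e)\<^sup>2 / A \<le> gamma_net e"
  using gamma_net_pos[of e] by (simp add: divide_le_eq power2_eq_square mult_left_mono)

lemma negligible_gamma_net_power2_div_smooth_norm:
  "negligible_net (\<lambda>e. (gamma_net e)\<^sup>2 / smooth_norm R e)"
proof (rule negligible_net_bounded[OF negligible_gamma_net])
  show "norm ((gamma_net e)\<^sup>2 / smooth_norm R e) \<le> gamma_net e" for e
    using gamma_net_power2_div_le[OF gamma_net_le_smooth_norm, of e R] smooth_norm_pos[of R e] by simp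
qed

definition smooth_max :: "(real \<Rightarrow> real) \<Rightarrow> (real \<Rightarrow> real) \<Rightarrow> real \<Rightarrow> real" where
  "smooth_max A B e = (A e + B e + smooth_norm (\<lambda>e. A e - B e) e) / 2"

definition smooth_min :: "(real \<Rightarrow> real) \<Rightarrow> (real \<Rightarrow> real) \<Rightarrow> real \<Rightarrow> real" where
  "smooth_min A B e = (A e + B e - smooth_norm (\<lambda>e. A e - B e) e) / 2"

lemma smooth_max_bounds:
  "max (A e) (B e) \<le> smooth_max A B e" "smooth_max A B e \<le> max (A e) (B e) + gamma_net e / 2"
  using norm_le_smooth_norm[of "\<lambda>e. A e - B e" e] smooth_norm_le[of "\<lambda>e. A e - B e" e]
  by (auto simp: smooth_max_def max_def)

lemma smooth_min_bounds:
  "min (A e) (B e) - gamma_net e / 2 \<le> smooth_min A B e" "smooth_min A B e \<le> min (A e) (B e)"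
  using norm_le_smooth_norm[of "\<lambda>e. A e - B e" e] smooth_norm_le[of "\<lambda>e. A e - B e" e]
  by (auto simp: smooth_min_def min_def)

lemma smooth_min_pos:
  assumes "gamma_net e \<le> A e" "gamma_net e \<le> B e" shows "smooth_min A B e > 0"
  using smooth_min_bounds(1)[where A=A and B=B and e=e] gamma_net_pos[of e] assms by linarith

lemma smooth_net_real_norm_power2: "smooth_net (R :: real \<Rightarrow> real) \<Longrightarrow> smooth_net (\<lambda>e. (norm (R e))\<^sup>2)"
  using smooth_net_mult[of R R] by (simp add: power2_eq_square)

lemma smooth_net_smooth_max_min:
  assumes "smooth_net A" "smooth_net B"
  shows "smooth_net (smooth_max A B)" "smooth_net (smooth_min A B)"
proof -
  have N: "smooth_net (smooth_norm (\<lambda>e. A e - B e))"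
    using assms by (intro smooth_net_smooth_normI smooth_net_real_norm_power2 smooth_net_diff)
  have "smooth_net (\<lambda>e. (1 / 2) * (A e + B e + smooth_norm (\<lambda>e. A e - B e) e))"
    by (intro smooth_net_mult smooth_net_const smooth_net_add assms N)
  then show "smooth_net (smooth_max A B)"
    by (rule smooth_net_cong) (simp add: smooth_max_def)
  have "smooth_net (\<lambda>e. (1 / 2) * (A e + B e - smooth_norm (\<lambda>e. A e - B e) e))"
    by (intro smooth_net_mult smooth_net_const smooth_net_add smooth_net_diff assms N)
  then show "smooth_net (smooth_min A B)"
    by (rule smooth_net_cong) (simp add: smooth_min_def)
qed

lemma moderate_net_smooth_max_min:
  assumes "moderate_net A" "moderate_net B"
  shows "moderate_net (smooth_max A B)" "moderate_net (smooth_min A B)"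
proof -
  have bound: "moderate_net (\<lambda>e. norm (A e) + norm (B e) + gamma_net e)"
    using assms negligible_imp_moderate_net[OF negligible_gamma_net]
    by (intro moderate_net_add moderate_net_norm)
  show "moderate_net (smooth_max A B)"
  proof (rule moderate_net_bounded[OF bound])
    fix e
    show "norm (smooth_max A B e) \<le> norm (A e) + norm (B e) + gamma_net e"
      using smooth_max_bounds[where A=A and B=B and e=e] gamma_net_pos[of e] by (simp add: max_def abs_le_iff split: if_splits; linarith)
  qed
  show "moderate_net (smooth_min A B)"
  proof (rule moderate_net_bounded[OF bound])
    fix e
    show "norm (smooth_min A B e) \<le> norm (A e) + norm (B e) + gamma_net e"
      using smooth_min_bounds[where A=A and B=B and e=e] gamma_net_pos[of e] by (simp add: min_def abs_le_iff split: if_splits; linarith)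
  qed
qed

lemma tau_sm_inv_cls_co_rrep:
  fixes A B h :: "real \<Rightarrow> real" and F :: "real \<Rightarrow> real \<Rightarrow> real"
  assumes A: "(\<lambda>e. of_real (A e) :: 'a::real_normed_field) \<in> EM_sm"
    and B: "(\<lambda>e. of_real (B e) :: 'a) \<in> EM_sm"
    and h: "(\<lambda>e. of_real (h e) :: 'a) \<in> EM_sm"
    and F_lipschitz: "\<And>a b c d. \<bar>F a b - F c d\<bar> \<le> \<bar>a - c\<bar> + \<bar>b - d\<bar>"
    and hF: "\<And>e. \<bar>h e - F (A e) (B e)\<bar> \<le> gamma_net e"
  shows "tau_sm_inv (cls_co (\<lambda>e. of_real (F (rrep (cls_sm (\<lambda>e. of_real (A e) :: 'a)) e)
                                          (rrep (cls_sm (\<lambda>e. of_real (B e) :: 'a)) e)) :: 'a))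
    = cls_sm (\<lambda>e. of_real (h e))"
proof (rule tau_sm_inv_cls_co[OF h])
  define A' B' where "A' = rrep (cls_sm (\<lambda>e. of_real (A e) :: 'a))"
    and "B' = rrep (cls_sm (\<lambda>e. of_real (B e) :: 'a))"
  have "negligible_net (\<lambda>e. gamma_net e + norm (A' e - A e) + norm (B' e - B e))"
    unfolding A'_def B'_def
    by (intro negligible_net_add negligible_gamma_net negligible_net_norm rrep_cls_sm A B)
  then show "negligible_net (\<lambda>e. (of_real (h e) :: 'a) - of_real (F (A' e) (B' e)))"
  proof (rule negligible_net_bounded)
    fix e :: real
    have "\<bar>h e - F (A' e) (B' e)\<bar> \<le> gamma_net e + norm (A' e - A e) + norm (B' e - B e)"
      using hF[of e] F_lipschitz[of "A e" "B e" "A' e" "B' e"] by (simp add: abs_minus_commute)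
    then show "norm ((of_real (h e) :: 'a) - of_real (F (A' e) (B' e)))
        \<le> gamma_net e + norm (A' e - A e) + norm (B' e - B e)"
      by (simp flip: of_real_diff)
  qed
qed

lemma gsup_cls_sm:
  fixes A B :: "real \<Rightarrow> real"
  assumes "smooth_net A" "moderate_net A" "smooth_net B" "moderate_net B"
  shows "gsup (cls_sm (\<lambda>e. of_real (A e) :: 'a::real_normed_field)) (cls_sm (\<lambda>e. of_real (B e)))
    = cls_sm (\<lambda>e. of_real (smooth_max A B e))"
  unfolding gsup_def
proof (rule tau_sm_inv_cls_co_rrep)
  show "\<bar>max a b - max c d\<bar> \<le> \<bar>a - c\<bar> + \<bar>b - d\<bar>" for a b c d :: real
    by (auto simp: max_def)
  show "\<bar>smooth_max A B e - max (A e) (B e)\<bar> \<le> gamma_net e" for e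
    using smooth_max_bounds[where A=A and B=B and e=e] gamma_net_pos[of e] by simp
qed (use assms in \<open>auto intro!: EM_sm_of_real smooth_net_smooth_max_min moderate_net_smooth_max_min\<close>)

lemma ginf_cls_sm:
  fixes A B :: "real \<Rightarrow> real"
  assumes "smooth_net A" "moderate_net A" "smooth_net B" "moderate_net B"
  shows "ginf (cls_sm (\<lambda>e. of_real (A e) :: 'a::real_normed_field)) (cls_sm (\<lambda>e. of_real (B e)))
    = cls_sm (\<lambda>e. of_real (smooth_min A B e))"
  unfolding ginf_def
proof (rule tau_sm_inv_cls_co_rrep)
  show "\<bar>min a b - min c d\<bar> \<le> \<bar>a - c\<bar> + \<bar>b - d\<bar>" for a b c d :: real
    by (auto simp: min_def)
  show "\<bar>smooth_min A B e - min (A e) (B e)\<bar> \<le> gamma_net e" for e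
    using smooth_min_bounds[where A=A and B=B and e=e] gamma_net_pos[of e] by simp
qed (use assms in \<open>auto intro!: EM_sm_of_real smooth_net_smooth_max_min moderate_net_smooth_max_min\<close>)

lemma principal_of_real_subset:
  fixes f g :: "real \<Rightarrow> real"
  assumes f: "smooth_net f" "moderate_net f" and g: "smooth_net g" "moderate_net g"
    and g_pos: "\<And>e. g e > 0" and fg: "\<And>e. \<bar>f e\<bar> \<le> C * g e"
  shows "principal (cls_sm (\<lambda>e. of_real (f e) :: 'a::real_normed_field))
    \<subseteq> principal (cls_sm (\<lambda>e. of_real (g e)))"
proof (rule principal_cls_sm_subset)
  show "(\<lambda>e. of_real (f e * (1 / g e)) :: 'a) \<in> EM_sm"
  proof (rule EM_sm_of_real)
    show "smooth_net (\<lambda>e. f e * (1 / g e))"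
      using f g g_pos by (intro smooth_net_mult smooth_net_inverse)
    show "moderate_net (\<lambda>e. f e * (1 / g e))"
      by (rule moderate_net_bounded[OF moderate_net_const[of C]])
        (use fg g_pos in \<open>simp add: abs_mult divide_le_eq abs_of_pos\<close>)
  qed
  have "g e * (f e * (1 / g e)) = f e" for e
    using g_pos[of e] by simp
  then have "of_real (g e) * of_real (f e * (1 / g e)) = (of_real (f e) :: 'a)" for e
    by (metis of_real_mult)
  then show "negligible_net (\<lambda>e. (of_real (f e) :: 'a) - of_real (g e) * of_real (f e * (1 / g e)))"
    using negligible_net_zero by simp
qed (use f g in \<open>auto intro: EM_sm_of_real\<close>)

lemma principal_add_eq_principal_smooth_max:
  fixes A B :: "real \<Rightarrow> real"
  assumes A: "smooth_net A" "moderate_net A" and B: "smooth_net B" "moderate_net B"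
    and gA: "\<And>e. gamma_net e \<le> A e" and gB: "\<And>e. gamma_net e \<le> B e"
  shows "principal (cls_sm (\<lambda>e. of_real (A e + B e) :: 'a::real_normed_field))
    = principal (cls_sm (\<lambda>e. of_real (smooth_max A B e)))"
proof -
  have pos: "A e > 0" "B e > 0" for e
    using gA[of e] gB[of e] gamma_net_pos[of e] by linarith+
  have AB: "smooth_net (\<lambda>e. A e + B e)" "moderate_net (\<lambda>e. A e + B e)"
    using A B by (auto intro: smooth_net_add moderate_net_add)
  note M = smooth_net_smooth_max_min(1)[OF A(1) B(1)] moderate_net_smooth_max_min(1)[OF A(2) B(2)]
  have le: "\<bar>A e + B e\<bar> \<le> 2 * smooth_max A B e" "\<bar>smooth_max A B e\<bar> \<le> 2 * A e + 2 * B e"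
    and M_pos: "smooth_max A B e > 0" for e
    using smooth_max_bounds[where A=A and B=B and e=e] pos[of e] gA[of e]
    by (auto simp: max_def split: if_splits)
  show ?thesis
  proof
    show "principal (cls_sm (\<lambda>e. of_real (A e + B e) :: 'a))
      \<subseteq> principal (cls_sm (\<lambda>e. of_real (smooth_max A B e)))"
      by (rule principal_of_real_subset[OF AB M, where C=2]) (simp_all add: le M_pos add_pos_pos pos)
    show "principal (cls_sm (\<lambda>e. of_real (smooth_max A B e) :: 'a))
      \<subseteq> principal (cls_sm (\<lambda>e. of_real (A e + B e)))"
      by (rule principal_of_real_subset[OF M AB, where C=2]) (simp_all add: le M_pos add_pos_pos pos)
  qed
qed

lemma EM_sm_mult_of_real_bounded:
  fixes R :: "real \<Rightarrow> 'a::real_normed_algebra_1" and c k :: "real \<Rightarrow> real"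
  assumes R: "R \<in> EM_sm" and c: "smooth_net c" and k: "moderate_net k"
    and bound: "\<And>e. norm (R e) * \<bar>c e\<bar> \<le> k e"
  shows "(\<lambda>e. R e * of_real (c e)) \<in> EM_sm"
  unfolding EM_sm_def
proof safe
  show "smooth_net (\<lambda>e. R e * of_real (c e))"
    using R c by (intro smooth_net_mult smooth_net_of_real) (auto dest: EM_smD)
  show "moderate_net (\<lambda>e. R e * of_real (c e))"
    by (rule moderate_net_bounded[OF k])
      (simp add: norm_mult_ineq bound order_trans[OF norm_mult_ineq])
qed

lemma negligible_smooth_norm: "negligible_net R \<Longrightarrow> negligible_net (smooth_norm R)"
  by (rule negligible_net_bounded[of "\<lambda>e. norm (R e) + gamma_net e"])
    (auto intro: negligible_net_add negligible_net_norm negligible_gamma_net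
      simp: smooth_norm_le abs_of_pos smooth_norm_pos)

lemma norm_common_multiple_le:
  fixes r s x y :: "'a::real_normed_algebra"
  shows "norm (r * x) \<le> min (norm r) (norm s) * (norm x + norm y) + norm (s * y - r * x)"
proof -
  have "norm (r * x) \<le> norm r * (norm x + norm y)"
    using norm_mult_ineq[of r x] by (simp add: mult_left_mono order_trans[OF _ mult_left_mono])
  then have "norm (r * x) \<le> norm r * (norm x + norm y) + norm (s * y - r * x)"
    by (simp add: add_increasing2)
  moreover have "norm (r * x) \<le> norm s * (norm x + norm y) + norm (s * y - r * x)"
    using norm_triangle_ineq4[of "s * y" "s * y - r * x"] norm_mult_ineq[of s y]
      mult_left_mono[of "norm y" "norm x + norm y" "norm s"] by simp
  ultimately show ?thesis by (simp add: min_def)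
qed

lemma fraction_sum_squares_bounds:
  fixes m q K Y :: real
  assumes m: "m > 0" and q: "q > 0" and K: "K \<ge> 0" and Y: "Y \<le> m * K + q * (K + 1)"
  shows "Y * q\<^sup>2 / (m\<^sup>2 + q\<^sup>2) \<le> q * (2 * K + 1)" "Y * m / (m\<^sup>2 + q\<^sup>2) \<le> 2 * K + 1"
proof -
  have d: "m\<^sup>2 + q\<^sup>2 > 0" using q by (simp add: add_nonneg_pos)
  have "2 * (m * q) \<le> m\<^sup>2 + q\<^sup>2"
    using sum_squares_bound[of m q] by (simp add: power2_eq_square mult.assoc)
  then have mq: "m * q \<le> m\<^sup>2 + q\<^sup>2"
    using mult_pos_pos[OF m q] by linarith
  have "Y * q\<^sup>2 \<le> (m * K + q * (K + 1)) * q\<^sup>2"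
    using Y by (simp add: mult_right_mono)
  also have "\<dots> = K * q * (m * q) + (K + 1) * q * q\<^sup>2"
    by (simp add: power2_eq_square algebra_simps)
  also have "\<dots> \<le> K * q * (m\<^sup>2 + q\<^sup>2) + (K + 1) * q * (m\<^sup>2 + q\<^sup>2)"
    using mq K q by (intro add_mono mult_left_mono) auto
  finally show "Y * q\<^sup>2 / (m\<^sup>2 + q\<^sup>2) \<le> q * (2 * K + 1)"
    using d by (simp add: divide_le_eq algebra_simps)
  have "Y * m \<le> (m * K + q * (K + 1)) * m"
    using Y m by (simp add: mult_right_mono)
  also have "\<dots> = K * m\<^sup>2 + (K + 1) * (m * q)"
    by (simp add: power2_eq_square algebra_simps)
  also have "\<dots> \<le> K * (m\<^sup>2 + q\<^sup>2) + (K + 1) * (m\<^sup>2 + q\<^sup>2)"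
    using mq K by (intro add_mono mult_left_mono) auto
  finally show "Y * m / (m\<^sup>2 + q\<^sup>2) \<le> 2 * K + 1"
    using d by (simp add: divide_le_eq algebra_simps)
qed

lemma norm_common_multiple_le_smooth_min:
  fixes R S x y :: "real \<Rightarrow> 'a::real_normed_algebra" and e :: real
  defines "K \<equiv> norm (x e) + norm (y e)"
  shows "norm (R e * x e) \<le> smooth_min (smooth_norm R) (smooth_norm S) e * K
    + smooth_norm (\<lambda>e. S e * y e - R e * x e) e * (K + 1)"
proof -
  let ?m = "smooth_min (smooth_norm R) (smooth_norm S) e"
    and ?q = "smooth_norm (\<lambda>e. S e * y e - R e * x e) e"
  have "min (norm (R e)) (norm (S e)) \<le> min (smooth_norm R e) (smooth_norm S e)"
    using norm_le_smooth_norm[of R e] norm_le_smooth_norm[of S e] by (simp add: min_def)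
  also have "\<dots> \<le> ?m + gamma_net e"
    using smooth_min_bounds(1)[where A="smooth_norm R" and B="smooth_norm S" and e=e] gamma_net_pos[of e]
    by linarith
  also have "\<dots> \<le> ?m + ?q"
    using gamma_net_le_smooth_norm by simp
  finally have "min (norm (R e)) (norm (S e)) * K \<le> (?m + ?q) * K"
    by (rule mult_right_mono) (simp add: K_def)
  moreover have "norm (R e * x e) \<le> min (norm (R e)) (norm (S e)) * K + norm (S e * y e - R e * x e)"
    unfolding K_def by (rule norm_common_multiple_le)
  moreover have "norm (S e * y e - R e * x e) \<le> ?q"
    using norm_le_smooth_norm[of "\<lambda>e. S e * y e - R e * x e" e] by simp
  ultimately show ?thesis by (simp add: algebra_simps)
qed

lemma norm_diff_mult_regularized_quotient:
  fixes p :: "'a::real_normed_field" and m q :: real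
  assumes "m * m + q * q > 0"
  shows "norm (p - of_real m * (p * of_real (m * (1 / (m * m + q * q)))))
    = norm p * (q * q) / (m * m + q * q)"
proof -
  have "1 - m * (m * (1 / (m * m + q * q))) = q * q / (m * m + q * q)"
    using assms by (auto simp: divide_simps)
  moreover have "p - of_real m * (p * of_real (m * (1 / (m * m + q * q))))
      = p * of_real (1 - m * (m * (1 / (m * m + q * q))))"
    by (simp add: algebra_simps)
  ultimately have "p - of_real m * (p * of_real (m * (1 / (m * m + q * q))))
      = p * of_real (q * q / (m * m + q * q))"
    by (simp only:)
  then show ?thesis
    using assms by (simp add: norm_mult del: of_real_mult of_real_divide of_real_add)
qed

lemma moderate_quotient_exists:
  fixes P :: "real \<Rightarrow> 'a::real_normed_field" and m q k :: "real \<Rightarrow> real"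
  assumes P: "P \<in> EM_sm" and m: "smooth_net m" "\<And>e. m e > 0"
    and q: "smooth_net q" "negligible_net q" "\<And>e. q e > 0"
    and k: "moderate_net k" "\<And>e. k e \<ge> 0"
    and P_le: "\<And>e. norm (P e) \<le> m e * k e + q e * (k e + 1)"
  obtains z where "z \<in> EM_sm" "negligible_net (\<lambda>e. P e - of_real (m e) * z e)"
proof -
  txt \<open>The regularized quotient \<open>P m / (m\<^sup>2 + q\<^sup>2)\<close> stays moderate because \<open>P\<close> is dominated
    by \<open>m\<close> up to \<open>q\<close>, and it misses \<open>P / m\<close> by \<open>P q\<^sup>2 / (m\<^sup>2 + q\<^sup>2)\<close>, which is as small as \<open>q\<close>.\<close>
  define w where "w e = m e * (1 / (m e * m e + q e * q e))" for e
  have den_pos: "m e * m e + q e * q e > 0" for e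
    using m(2)[of e] q(3)[of e] by (simp add: add_pos_pos)
  have bounds: "norm (P e) * (q e * q e) / (m e * m e + q e * q e) \<le> q e * (2 * k e + 1)"
    "norm (P e) * \<bar>w e\<bar> \<le> 2 * k e + 1" for e
    using fraction_sum_squares_bounds[OF m(2) q(3) k(2) P_le, of e] m(2)[of e] den_pos[of e]
    by (simp_all add: w_def power2_eq_square abs_of_pos)
  have k': "moderate_net (\<lambda>e. 2 * k e + 1)"
    using k(1) by (intro moderate_net_add moderate_net_mult moderate_net_const)
  have "(\<lambda>e. P e * of_real (w e)) \<in> EM_sm"
  proof (rule EM_sm_mult_of_real_bounded[OF P _ k' bounds(2)])
    show "smooth_net w"
      unfolding w_def using m q den_pos by (intro smooth_net_mult smooth_net_inverse smooth_net_add) auto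
  qed
  moreover have "negligible_net (\<lambda>e. P e - of_real (m e) * (P e * of_real (w e)))"
  proof (rule negligible_net_bounded)
    show "negligible_net (\<lambda>e. q e * (2 * k e + 1))"
      using q(2) k' by (rule negligible_net_mult)
    show "norm (P e - of_real (m e) * (P e * of_real (w e))) \<le> q e * (2 * k e + 1)" for e
      using norm_diff_mult_regularized_quotient[OF den_pos[of e], of "P e"] bounds(1)[of e]
      by (simp add: w_def)
  qed
  ultimately show ?thesis by (rule that)
qed

section \<open>Fields with a conjugation\<close>

text \<open>This covers \<open>\<real>\<close> (\<open>cj = id\<close>) and \<open>\<complex>\<close> (\<open>cj = cnj\<close>) at once: dividing by a net \<open>R\<close> is
  done through \<open>cj R / \<bar>R\<bar>\<^sup>2\<close>, and \<open>re\<close> makes \<open>\<bar>R\<bar>\<^sup>2 = re (R cj R)\<close> visibly smooth.\<close>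

locale conjugation =
  fixes cj :: "'a::real_normed_field \<Rightarrow> 'a" and re :: "'a \<Rightarrow> real"
  assumes bounded_linear_cj: "bounded_linear cj"
    and bounded_linear_re: "bounded_linear re"
    and re_of_real: "\<And>t. re (of_real t) = t"
    and mult_cj: "\<And>x. x * cj x = of_real ((norm x)\<^sup>2)"
    and norm_cj: "\<And>x. norm (cj x) = norm x"
begin

lemma smooth_net_norm_power2: "smooth_net (R :: real \<Rightarrow> 'a) \<Longrightarrow> smooth_net (\<lambda>e. (norm (R e))\<^sup>2)"
  using smooth_net_bounded_linear[OF bounded_linear_re
      smooth_net_mult[OF _ smooth_net_bounded_linear[OF bounded_linear_cj]], of R R]
  by (simp add: mult_cj re_of_real del: of_real_power)

lemma EM_sm_cj: "(R :: real \<Rightarrow> 'a) \<in> EM_sm \<Longrightarrow> (\<lambda>e. cj (R e)) \<in> EM_sm"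
  by (auto simp: EM_sm_def norm_cj intro: smooth_net_bounded_linear[OF bounded_linear_cj]
      elim!: moderate_net_le)

lemma smooth_net_smooth_norm: "(R :: real \<Rightarrow> 'a) \<in> EM_sm \<Longrightarrow> smooth_net (smooth_norm R)"
  by (intro smooth_net_smooth_normI smooth_net_norm_power2) (auto dest: EM_smD)

lemma moderate_net_smooth_norm: "(R :: real \<Rightarrow> 'a) \<in> EM_sm \<Longrightarrow> moderate_net (smooth_norm R)"
  by (intro moderate_net_smooth_normI) (auto dest: EM_smD)

lemma EM_sm_of_real_smooth_norm: "(R :: real \<Rightarrow> 'a) \<in> EM_sm \<Longrightarrow> (\<lambda>e. of_real (smooth_norm R e) :: 'a) \<in> EM_sm"
  by (intro EM_sm_of_real smooth_net_smooth_norm moderate_net_smooth_norm)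

lemma gabs_eq_smooth_norm:
  assumes "r \<in> (K_sm :: (real \<Rightarrow> 'a) set set)"
  shows "gabs r = cls_sm (\<lambda>e. of_real (smooth_norm (rep r) e))"
  unfolding gabs_def
proof (rule tau_sm_inv_cls_co)
  have "rep r \<in> EM_sm" using assms by (rule K_smE)
  then show "(\<lambda>e. of_real (smooth_norm (rep r) e) :: 'a) \<in> EM_sm"
    by (rule EM_sm_of_real_smooth_norm)
  show "negligible_net (\<lambda>e. (of_real (smooth_norm (rep r) e) :: 'a) - of_real (norm (rep r e)))"
    using negligible_gamma_net
  proof (rule negligible_net_bounded)
    fix e
    show "norm ((of_real (smooth_norm (rep r) e) :: 'a) - of_real (norm (rep r e))) \<le> gamma_net e"
      using norm_le_smooth_norm[of "rep r" e] smooth_norm_le[of "rep r" e]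
      by (simp flip: of_real_diff)
  qed
qed

lemma mult_cj_mult_of_real:
  "(R :: real \<Rightarrow> 'a) e * (cj (R e) * of_real c) = of_real (((smooth_norm R e)\<^sup>2 - (gamma_net e)\<^sup>2) * c)"
  by (simp add: mult.assoc[symmetric] mult_cj smooth_norm_power2)

lemma EM_sm_cj_div_smooth_norm:
  assumes "(R :: real \<Rightarrow> 'a) \<in> EM_sm"
  shows "(\<lambda>e. cj (R e) * of_real (1 / smooth_norm R e)) \<in> EM_sm"
proof (rule EM_sm_mult_of_real_bounded[OF EM_sm_cj[OF assms] _ moderate_net_const[of 1]])
  show "smooth_net (\<lambda>e. 1 / smooth_norm R e)"
    using assms by (intro smooth_net_inverse smooth_net_smooth_norm smooth_norm_pos)
  show "norm (cj (R e)) * \<bar>1 / smooth_norm R e\<bar> \<le> 1" for e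
    using norm_le_smooth_norm[of R e] smooth_norm_pos[of R e]
    by (simp add: norm_cj divide_le_eq)
qed

lemma mult_cj_div_smooth_norm:
  "(R :: real \<Rightarrow> 'a) e * (cj (R e) * of_real (1 / smooth_norm R e))
    = of_real (smooth_norm R e - (gamma_net e)\<^sup>2 / smooth_norm R e)"
proof -
  have "((smooth_norm R e)\<^sup>2 - (gamma_net e)\<^sup>2) * (1 / smooth_norm R e)
      = smooth_norm R e - (gamma_net e)\<^sup>2 / smooth_norm R e"
    using smooth_norm_pos[of R e] by (simp add: power2_eq_square field_simps)
  then show ?thesis by (simp only: mult_cj_mult_of_real)
qed

lemma EM_sm_of_real_smooth_norm_add:
  "(R :: real \<Rightarrow> 'a) \<in> EM_sm \<Longrightarrow> (S :: real \<Rightarrow> 'a) \<in> EM_sm \<Longrightarrow>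
    (\<lambda>e. of_real (smooth_norm R e + smooth_norm S e) :: 'a) \<in> EM_sm"
  by (intro EM_sm_of_real smooth_net_add moderate_net_add smooth_net_smooth_norm moderate_net_smooth_norm)

lemma principal_subset_principal_smooth_norm_add:
  fixes R S T :: "real \<Rightarrow> 'a"
  assumes R: "R \<in> EM_sm" and S: "S \<in> EM_sm" and T: "T \<in> EM_sm"
    and T_le: "\<And>e. norm (T e) \<le> smooth_norm R e + smooth_norm S e"
  shows "principal (cls_sm T) \<subseteq> principal (cls_sm (\<lambda>e. of_real (smooth_norm R e + smooth_norm S e)))"
proof (rule principal_cls_sm_subset[OF T EM_sm_of_real_smooth_norm_add[OF R S]])
  define D where "D e = smooth_norm R e + smooth_norm S e" for e
  have D_pos: "D e > 0" for e
    by (simp add: D_def add_pos_pos smooth_norm_pos)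
  show "(\<lambda>e. T e * of_real (1 / (smooth_norm R e + smooth_norm S e))) \<in> EM_sm"
    unfolding D_def[symmetric] using T R S D_pos T_le
    by (intro EM_sm_mult_of_real_bounded[where k="\<lambda>_. 1"] moderate_net_const)
      (auto simp: D_def divide_le_eq abs_of_pos intro!: smooth_net_inverse smooth_net_add smooth_net_smooth_norm)
  have "(of_real (D e) :: 'a) * of_real (1 / D e) = 1" for e
    using D_pos[of e] by (simp flip: of_real_mult)
  then have "T e - of_real (D e) * (T e * of_real (1 / D e)) = 0" for e
    by (metis mult.left_commute mult.right_neutral right_minus_eq)
  then show "negligible_net (\<lambda>e. T e - of_real (smooth_norm R e + smooth_norm S e)
      * (T e * of_real (1 / (smooth_norm R e + smooth_norm S e))))"
    using negligible_net_zero by (simp add: D_def)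
qed

lemma principal_smooth_norm_add_subset_ideal_sum:
  fixes R S :: "real \<Rightarrow> 'a"
  assumes R: "R \<in> EM_sm" and S: "S \<in> EM_sm"
  shows "principal (cls_sm (\<lambda>e. of_real (smooth_norm R e + smooth_norm S e)))
    \<subseteq> ideal_sum (principal (cls_sm R)) (principal (cls_sm S))"
proof
  fix X :: "(real \<Rightarrow> 'a) set"
  assume "X \<in> principal (cls_sm (\<lambda>e. of_real (smooth_norm R e + smooth_norm S e)))"
  then obtain z where z: "z \<in> EM_sm"
    and X: "X = cls_sm (\<lambda>e. of_real (smooth_norm R e + smooth_norm S e) * z e)"
    by (rule principal_cls_smE[OF EM_sm_of_real_smooth_norm_add[OF R S]])
  define x y where "x e = cj (R e) * of_real (1 / smooth_norm R e) * z e"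
    and "y e = cj (S e) * of_real (1 / smooth_norm S e) * z e" for e
  have xy: "x \<in> EM_sm" "y \<in> EM_sm"
    unfolding x_def y_def by (intro EM_sm_mult EM_sm_cj_div_smooth_norm R S z)+
  define c where "c e = (gamma_net e)\<^sup>2 / smooth_norm R e + (gamma_net e)\<^sup>2 / smooth_norm S e" for e
  have "of_real (smooth_norm R e + smooth_norm S e) * z e - (R e * x e + S e * y e) = of_real (c e) * z e"
    for e
  proof -
    let ?a = "smooth_norm R e - (gamma_net e)\<^sup>2 / smooth_norm R e"
      and ?b = "smooth_norm S e - (gamma_net e)\<^sup>2 / smooth_norm S e"
    have "R e * x e = of_real ?a * z e" "S e * y e = of_real ?b * z e"
      unfolding x_def y_def by (subst mult.assoc[symmetric], subst mult_cj_div_smooth_norm, rule refl)+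
    then have "of_real (smooth_norm R e + smooth_norm S e) * z e - (R e * x e + S e * y e)
        = (of_real (smooth_norm R e + smooth_norm S e) - of_real ?a - of_real ?b) * z e"
      by (simp add: algebra_simps del: of_real_add of_real_diff of_real_divide of_real_power)
    also have "of_real (smooth_norm R e + smooth_norm S e) - of_real ?a - of_real ?b = (of_real (c e) :: 'a)"
      by (simp only: of_real_diff[symmetric]) (simp add: c_def)
    finally show ?thesis .
  qed
  moreover have "negligible_net (\<lambda>e. of_real (c e) * z e)"
    unfolding c_def using z
    by (intro negligible_net_mult negligible_net_of_real negligible_net_add
        negligible_gamma_net_power2_div_smooth_norm) (auto dest: EM_smD)
  ultimately have "X = cls_sm (\<lambda>e. R e * x e + S e * y e)"
    unfolding X by (intro cls_sm_eqI) simp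
  with xy show "X \<in> ideal_sum (principal (cls_sm R)) (principal (cls_sm S))"
    unfolding ideal_sum_principal_cls_sm[OF R S] by (intro CollectI exI[of _ x] exI[of _ y]) simp
qed

lemma ideal_sum_principal_eq_principal_smooth_norm_add:
  fixes R S :: "real \<Rightarrow> 'a"
  assumes R: "R \<in> EM_sm" and S: "S \<in> EM_sm"
  shows "ideal_sum (principal (cls_sm R)) (principal (cls_sm S))
    = principal (cls_sm (\<lambda>e. of_real (smooth_norm R e + smooth_norm S e)))"
    (is "_ = ?P")
proof
  have "norm (R e) \<le> smooth_norm R e + smooth_norm S e" "norm (S e) \<le> smooth_norm R e + smooth_norm S e"
    for e using norm_le_smooth_norm[of R e] norm_le_smooth_norm[of S e] smooth_norm_pos[of R e]
      smooth_norm_pos[of S e] by auto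
  then have "ideal_sum (principal (cls_sm R)) (principal (cls_sm S)) \<subseteq> ideal_sum ?P ?P"
    using R S by (intro ideal_sum_mono principal_subset_principal_smooth_norm_add)
  then show "ideal_sum (principal (cls_sm R)) (principal (cls_sm S)) \<subseteq> ?P"
    using ideal_sum_principal_self_subset[OF EM_sm_of_real_smooth_norm_add[OF R S]] by blast
  show "?P \<subseteq> ideal_sum (principal (cls_sm R)) (principal (cls_sm S))"
    using R S by (rule principal_smooth_norm_add_subset_ideal_sum)
qed

lemma principal_subset_of_le_smooth_norm:
  fixes R :: "real \<Rightarrow> 'a" and m :: "real \<Rightarrow> real"
  assumes R: "R \<in> EM_sm" and m: "smooth_net m" "moderate_net m"
    and m_pos: "\<And>e. m e > 0" and m_le: "\<And>e. m e \<le> smooth_norm R e"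
  shows "principal (cls_sm (\<lambda>e. of_real (m e) :: 'a)) \<subseteq> principal (cls_sm R)"
proof (rule principal_cls_sm_subset[OF EM_sm_of_real[OF m] R])
  define c where "c e = m e * (1 / (smooth_norm R e * smooth_norm R e))" for e
  have A_pos: "smooth_norm R e > 0" for e by (rule smooth_norm_pos)
  show "(\<lambda>e. cj (R e) * of_real (c e)) \<in> EM_sm"
  proof (rule EM_sm_mult_of_real_bounded[OF EM_sm_cj[OF R] _ moderate_net_const[of 1]])
    show "smooth_net c" unfolding c_def
      using smooth_net_smooth_norm[OF R] A_pos
      by (intro smooth_net_mult m smooth_net_inverse) (auto intro: mult_pos_pos)
    have "norm (R e) * m e \<le> smooth_norm R e * smooth_norm R e" for e
      using norm_le_smooth_norm[of R e] m_le[of e] m_pos[of e] by (intro mult_mono) auto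
    then show "norm (cj (R e)) * \<bar>c e\<bar> \<le> 1" for e
      using A_pos[of e] m_pos[of e]
      by (simp add: c_def norm_cj abs_of_pos divide_le_eq power2_eq_square)
  qed
  show "negligible_net (\<lambda>e. (of_real (m e) :: 'a) - R e * (cj (R e) * of_real (c e)))"
  proof (rule negligible_net_bounded[OF negligible_gamma_net])
    fix e
    have defect: "m e - ((smooth_norm R e)\<^sup>2 - (gamma_net e)\<^sup>2) * c e
        = (gamma_net e)\<^sup>2 * m e / (smooth_norm R e)\<^sup>2"
      using A_pos[of e] by (simp add: c_def power2_eq_square field_simps)
    have "(gamma_net e)\<^sup>2 * m e / (smooth_norm R e)\<^sup>2 \<le> (gamma_net e)\<^sup>2 / smooth_norm R e"
      using m_le[of e] A_pos[of e] gamma_net_pos[of e]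
      by (simp add: power2_eq_square divide_le_eq field_simps mult_left_mono)
    also have "\<dots> \<le> gamma_net e"
      by (rule gamma_net_power2_div_le[OF gamma_net_le_smooth_norm])
    finally show "norm ((of_real (m e) :: 'a) - R e * (cj (R e) * of_real (c e))) \<le> gamma_net e"
      using m_pos[of e] A_pos[of e]
      by (simp only: mult_cj_mult_of_real norm_of_real defect flip: of_real_diff) simp
  qed
qed

lemma principal_Int_subset_principal_smooth_min:
  fixes R S :: "real \<Rightarrow> 'a"
  assumes R: "R \<in> EM_sm" and S: "S \<in> EM_sm"
  shows "principal (cls_sm R) \<inter> principal (cls_sm S)
    \<subseteq> principal (cls_sm (\<lambda>e. of_real (smooth_min (smooth_norm R) (smooth_norm S) e)))"
    (is "_ \<subseteq> principal (cls_sm (\<lambda>e. of_real (?m e)))")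
proof
  fix X :: "(real \<Rightarrow> 'a) set"
  assume X: "X \<in> principal (cls_sm R) \<inter> principal (cls_sm S)"
  obtain x where x: "x \<in> EM_sm" and Xx: "X = cls_sm (\<lambda>e. R e * x e)"
    using X by (auto elim: principal_cls_smE[OF R])
  obtain y where y: "y \<in> EM_sm" and Xy: "X = cls_sm (\<lambda>e. S e * y e)"
    using X by (auto elim: principal_cls_smE[OF S])
  define n where "n = (\<lambda>e. S e * y e - R e * x e)"
  have "negligible_net n"
    unfolding n_def using Xx Xy EM_sm_mult[OF S y] by (auto intro: cls_sm_eqD)
  then have n: "negligible_net n" "n \<in> EM_sm"
    unfolding n_def using R S x y
    by (auto simp: EM_sm_def intro!: negligible_imp_moderate_net smooth_net_diff smooth_net_mult)
  have m: "smooth_net ?m" "moderate_net ?m" "?m e > 0" for e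
    using R S by (auto intro!: smooth_net_smooth_max_min moderate_net_smooth_max_min smooth_net_smooth_norm
      moderate_net_smooth_norm smooth_min_pos gamma_net_le_smooth_norm)
  have "norm (R e * x e)
      \<le> ?m e * (norm (x e) + norm (y e)) + smooth_norm n e * (norm (x e) + norm (y e) + 1)" for e
    unfolding n_def by (rule norm_common_multiple_le_smooth_min)
  moreover have "moderate_net (\<lambda>e. norm (x e) + norm (y e))"
    using x y by (intro moderate_net_add moderate_net_norm) (auto dest: EM_smD)
  ultimately obtain z where z: "z \<in> EM_sm"
    and defect: "negligible_net (\<lambda>e. R e * x e - of_real (?m e) * z e)"
    using moderate_quotient_exists[OF EM_sm_mult[OF R x] m(1,3) smooth_net_smooth_norm[OF n(2)]
        negligible_smooth_norm[OF n(1)] smooth_norm_pos, of "\<lambda>e. norm (x e) + norm (y e)"]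
    by auto
  have "X = cls_sm (\<lambda>e. of_real (?m e) * z e)"
    unfolding Xx using defect by (rule cls_sm_eqI)
  with z show "X \<in> principal (cls_sm (\<lambda>e. of_real (?m e)))"
    unfolding principal_cls_sm[OF EM_sm_of_real[OF m(1,2)]]
    by blast
qed

lemma principal_Int_eq_principal_smooth_min:
  fixes R S :: "real \<Rightarrow> 'a"
  assumes R: "R \<in> EM_sm" and S: "S \<in> EM_sm"
  shows "principal (cls_sm R) \<inter> principal (cls_sm S)
    = principal (cls_sm (\<lambda>e. of_real (smooth_min (smooth_norm R) (smooth_norm S) e)))"
proof
  let ?m = "smooth_min (smooth_norm R) (smooth_norm S)"
  have m: "smooth_net ?m" "moderate_net ?m" "?m e > 0" for e
    using R S by (auto intro!: smooth_net_smooth_max_min moderate_net_smooth_max_min smooth_net_smooth_norm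
      moderate_net_smooth_norm smooth_min_pos gamma_net_le_smooth_norm)
  have "?m e \<le> smooth_norm R e" "?m e \<le> smooth_norm S e" for e
    using smooth_min_bounds(2)[where A="smooth_norm R" and B="smooth_norm S" and e=e] by auto
  then have "principal (cls_sm (\<lambda>e. of_real (?m e))) \<subseteq> principal (cls_sm R)"
    "principal (cls_sm (\<lambda>e. of_real (?m e))) \<subseteq> principal (cls_sm S)"
    using principal_subset_of_le_smooth_norm[OF R m(1,2)] principal_subset_of_le_smooth_norm[OF S m(1,2)]
      m(3) by blast+
  then show "principal (cls_sm (\<lambda>e. of_real (?m e))) \<subseteq> principal (cls_sm R) \<inter> principal (cls_sm S)"
    by blast
qed (use R S in \<open>rule principal_Int_subset_principal_smooth_min\<close>)

theorem principal_ideals_gabs: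
  assumes r: "r \<in> (K_sm :: (real \<Rightarrow> 'a) set set)" and s: "s \<in> K_sm"
  shows "ideal_sum (principal r) (principal s) = principal (gadd (gabs r) (gabs s))"
    "principal (gadd (gabs r) (gabs s)) = principal (gsup (gabs r) (gabs s))"
    "principal r \<inter> principal s = principal (ginf (gabs r) (gabs s))"
proof -
  define R S where "R = rep r" and "S = rep s"
  have R: "R \<in> EM_sm" "r = cls_sm R" and S: "S \<in> EM_sm" "s = cls_sm S"
    using r s by (auto simp: R_def S_def elim: K_smE)
  define A B where "A = smooth_norm R" and "B = smooth_norm S"
  have A: "smooth_net A" "moderate_net A" and B: "smooth_net B" "moderate_net B"
    using R S by (auto simp: A_def B_def intro: smooth_net_smooth_norm moderate_net_smooth_norm)
  have gabs: "gabs r = cls_sm (\<lambda>e. of_real (A e))" "gabs s = cls_sm (\<lambda>e. of_real (B e))"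
    using gabs_eq_smooth_norm[OF r] gabs_eq_smooth_norm[OF s] by (simp_all add: A_def B_def R_def S_def)
  have gadd: "gadd (gabs r) (gabs s) = cls_sm (\<lambda>e. of_real (A e + B e))"
    unfolding gabs using A B by (simp add: gadd_cls_sm EM_sm_of_real)
  have "ideal_sum (principal (cls_sm R)) (principal (cls_sm S)) = principal (cls_sm (\<lambda>e. of_real (A e + B e)))"
    unfolding A_def B_def using R(1) S(1) by (rule ideal_sum_principal_eq_principal_smooth_norm_add)
  then show "ideal_sum (principal r) (principal s) = principal (gadd (gabs r) (gabs s))"
    by (simp only: gadd flip: R(2) S(2))
  show "principal (gadd (gabs r) (gabs s)) = principal (gsup (gabs r) (gabs s))"
    unfolding gadd gsup_cls_sm[OF A B, where 'a='a, folded gabs]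
    using A B by (rule principal_add_eq_principal_smooth_max) (auto simp: A_def B_def gamma_net_le_smooth_norm)
  have "principal (cls_sm R) \<inter> principal (cls_sm S)
      = principal (cls_sm (\<lambda>e. of_real (smooth_min A B e)))"
    unfolding A_def B_def using R(1) S(1) by (rule principal_Int_eq_principal_smooth_min)
  then show "principal r \<inter> principal s = principal (ginf (gabs r) (gabs s))"
    by (simp only: ginf_cls_sm[OF A B, where 'a='a, folded gabs] flip: R(2) S(2))
qed

end

interpretation real: conjugation "\<lambda>x::real. x" "\<lambda>x. x"
  by (rule conjugation.intro) (simp_all add: power2_eq_square)

interpretation complex: conjugation cnj Re
  by (rule conjugation.intro)
    (simp_all add: bounded_linear_cnj bounded_linear_Re complex_norm_square[symmetric] del: of_real_power)

theorem proposition4p26: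
  shows "(\<forall>r \<in> (K_sm :: (real \<Rightarrow> real) set set). \<forall>s \<in> K_sm.
            ideal_sum (principal r) (principal s) = principal (gadd (gabs r) (gabs s))
          \<and> principal (gadd (gabs r) (gabs s)) = principal (gsup (gabs r) (gabs s))
          \<and> principal r \<inter> principal s = principal (ginf (gabs r) (gabs s)))
       \<and> (\<forall>r \<in> (K_sm :: (real \<Rightarrow> complex) set set). \<forall>s \<in> K_sm.
            ideal_sum (principal r) (principal s) = principal (gadd (gabs r) (gabs s))
          \<and> principal (gadd (gabs r) (gabs s)) = principal (gsup (gabs r) (gabs s))
          \<and> principal r \<inter> principal s = principal (ginf (gabs r) (gabs s)))"
  using real.principal_ideals_gabs complex.principal_ideals_gabs by blast

end
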